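(* Let $G=(V,E,p)$ be an influence graph. For every partial realization $\psi$ under full-adoption feedback, $$\sigma(\Gamma(\psi))\le|\Gamma(\psi)|+\sigma(\partial(\psi)).$$ Moreover, if $G$ is an in-arborescence, then $$\sigma(\Gamma(\psi))\le|\Gamma(\psi)|+\mathrm{OPT}_N(G,|{\rm dom}(\psi)|).$$
   Context: IC model: each edge $(u,v)$ has probability $p_{uv}\in[0,1]$; a realization (live-edge graph) $\phi$ contains each edge independently with probability $p_{uv}$, with distribution $\mathcal{P}$. $\Gamma(S,\phi)$ is the set of nodes reachable from $S$ in $\phi$; $\sigma(S)=\mathbb{E}_{\Phi\sim\mathcal{P}}|\Gamma(S,\Phi)|$; $\mathrm{OPT}_N(G,k)=\max_{S\subseteq V,|S|\le k}\sigma(S)$. Full-adoption feedback: selecting $u$ as a seed reveals the status of all out-going edges of every node reachable from $u$ in $\phi$. A partial realization $\psi$ records the seeds selected so far (the set ${\rm dom}(\psi)$) with their feedback; $\Gamma(\psi)$ is the set of nodes reachable from ${\rm dom}(\psi)$ through live edges (determined by $\psi$). The boundary $\partial(\psi)$ is a subset of $\Gamma(\psi)$ of minimum cardinality such that $G$ has no directed edge from $\Gamma(\psi)\setminus\partial(\psi)$ to $V\setminus\Gamma(\psi)$ (ties broken arbitrarily). An in-arborescence is an influence graph whose underlying graph is a directed tree with a root $r$ such that for every node $v$ the unique path between $v$ and $r$ is directed from $v$ to $r$. *)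

theory Defs
  imports Complex_Main
begin

definition influence_graph :: "'a set \<Rightarrow> ('a \<times> 'a) set \<Rightarrow> ('a \<times> 'a \<Rightarrow> real) \<Rightarrow> bool" where
  "influence_graph V E p \<longleftrightarrow> finite V \<and> E \<subseteq> V \<times> V \<and> (\<forall>e\<in>E. 0 \<le> p e \<and> p e \<le> 1)"

definition real_prob :: "('a \<times> 'a) set \<Rightarrow> ('a \<times> 'a \<Rightarrow> real) \<Rightarrow> ('a \<times> 'a) set \<Rightarrow> real" where
  "real_prob E p phi = (\<Prod>e\<in>phi. p e) * (\<Prod>e\<in>E - phi. 1 - p e)"

definition reach :: "'a set \<Rightarrow> ('a \<times> 'a) set \<Rightarrow> 'a set" where
  "reach S phi = (phi\<^sup>*) `` S"

definition sigma :: "('a \<times> 'a) set \<Rightarrow> ('a \<times> 'a \<Rightarrow> real) \<Rightarrow> 'a set \<Rightarrow> real" where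
  "sigma E p S = (\<Sum>phi\<in>Pow E. real_prob E p phi * real (card (reach S phi)))"

definition OPT_N :: "'a set \<Rightarrow> ('a \<times> 'a) set \<Rightarrow> ('a \<times> 'a \<Rightarrow> real) \<Rightarrow> nat \<Rightarrow> real" where
  "OPT_N V E p k = Max {sigma E p S | S. S \<subseteq> V \<and> card S \<le> k}"

text \<open>Partial realization under full-adoption feedback: a pair (S, L) of the seed set
  dom(psi) = S and the set L of observed live edges; it must be consistent with some full
  realization phi, where all out-going edges of every node reachable from S are observed.\<close>
definition partial_realization ::
  "'a set \<Rightarrow> ('a \<times> 'a) set \<Rightarrow> 'a set \<times> ('a \<times> 'a) set \<Rightarrow> bool" where
  "partial_realization V E psi \<longleftrightarrow>
     (\<exists>phi\<subseteq>E. fst psi \<subseteq> V \<and>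
        snd psi = phi \<inter> {(u, v) \<in> E. u \<in> reach (fst psi) phi})"

definition pdom :: "'a set \<times> ('a \<times> 'a) set \<Rightarrow> 'a set" where
  "pdom psi = fst psi"

definition Gamma_psi :: "'a set \<times> ('a \<times> 'a) set \<Rightarrow> 'a set" where
  "Gamma_psi psi = reach (fst psi) (snd psi)"

definition boundary_cond :: "'a set \<Rightarrow> ('a \<times> 'a) set \<Rightarrow> 'a set \<Rightarrow> 'a set \<Rightarrow> bool" where
  "boundary_cond V E Gam B \<longleftrightarrow> B \<subseteq> Gam \<and>
     (\<forall>(u, v)\<in>E. \<not> (u \<in> Gam - B \<and> v \<in> V - Gam))"

definition is_boundary ::
  "'a set \<Rightarrow> ('a \<times> 'a) set \<Rightarrow> 'a set \<times> ('a \<times> 'a) set \<Rightarrow> 'a set \<Rightarrow> bool" where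
  "is_boundary V E psi B \<longleftrightarrow> boundary_cond V E (Gamma_psi psi) B \<and>
     (\<forall>B'. boundary_cond V E (Gamma_psi psi) B' \<longrightarrow> card B \<le> card B')"

text \<open>In-arborescence with root r: the underlying undirected graph is a tree (simple,
  connected, |V| - 1 edges) and for every node v the unique path between v and r is
  directed from v to r, i.e. r is reachable from v along directed edges.\<close>
definition in_arborescence :: "'a set \<Rightarrow> ('a \<times> 'a) set \<Rightarrow> 'a \<Rightarrow> bool" where
  "in_arborescence V E r \<longleftrightarrow>
     r \<in> V \<and>
     (\<forall>(u, v)\<in>E. u \<noteq> v \<and> (v, u) \<notin> E) \<and>
     (\<forall>u\<in>V. \<forall>v\<in>V. (u, v) \<in> (E \<union> E\<inverse>)\<^sup>*) \<and>
     card {{u, v} | u v. (u, v) \<in> E} = card V - 1 \<and>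
     (\<forall>v\<in>V. (v, r) \<in> E\<^sup>*)"

end

theory Submission
  imports Defs
begin

text \<open>For a fixed live-edge graph, every node reached from \<open>\<Gamma>(\<psi>)\<close> either lies in \<open>\<Gamma>(\<psi>)\<close> or
  is reached through a node of the boundary, because only boundary nodes have edges leaving
  \<open>\<Gamma>(\<psi>)\<close>; taking expectations gives the first inequality. In an in-arborescence every node has
  out-degree at most one (otherwise there would be at least \<open>|V|\<close> edges), so each seed has a
  unique maximal path of observed live edges. A node of \<open>\<Gamma>(\<psi>)\<close> with an edge leaving \<open>\<Gamma>(\<psi>)\<close>
  has no live out-edge, hence it is the end of such a path. These nodes therefore form a
  boundary with at most \<open>|dom(\<psi>)|\<close> elements, whose spread is bounded by \<open>OPT\<^sub>N\<close>.\<close>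

lemma reach_subset_Un_Range: "reach S R \<subseteq> S \<union> Range R"
proof
  fix w assume "w \<in> reach S R"
  then obtain s where "s \<in> S" "(s, w) \<in> R\<^sup>*" unfolding reach_def by blast
  from this(2) show "w \<in> S \<union> Range R" using \<open>s \<in> S\<close> by (cases rule: rtranclE) auto
qed

lemma reach_subset:
  assumes "S \<subseteq> V" "R \<subseteq> V \<times> V"
  shows "reach S R \<subseteq> V"
  using reach_subset_Un_Range[of S R] assms by blast

lemma reach_subset_Un_reach_boundary:
  assumes "E \<subseteq> V \<times> V" "phi \<subseteq> E" "boundary_cond V E Gam B"
  shows "reach Gam phi \<subseteq> Gam \<union> reach B phi"
proof
  fix w assume "w \<in> reach Gam phi"
  then obtain u where "u \<in> Gam" "(u, w) \<in> phi\<^sup>*" unfolding reach_def by blast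
  from this(2) show "w \<in> Gam \<union> reach B phi"
  proof (induction rule: rtrancl_induct)
    case base
    show ?case using \<open>u \<in> Gam\<close> by simp
  next
    case (step x y)
    consider "y \<in> Gam" | "x \<in> reach B phi" | "x \<in> Gam - B" "y \<notin> Gam"
      using step.IH unfolding reach_def by blast
    then show ?case
    proof cases
      case 2
      then show ?thesis using step.hyps(2) unfolding reach_def by (blast intro: rtrancl_into_rtrancl)
    next
      case 3
      have "(x, y) \<in> E" "y \<in> V" using step.hyps(2) assms(1,2) by auto
      then show ?thesis using 3 assms(3) unfolding boundary_cond_def by blast
    qed simp
  qed
qed

lemma sum_real_prob_Pow:
  assumes "finite E"
  shows "(\<Sum>phi\<in>Pow E. real_prob E p phi) = 1"
  using prod_add[OF assms, of p "\<lambda>e. 1 - p e"] unfolding real_prob_def by simp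

lemma real_prob_nonneg:
  assumes "\<forall>e\<in>E. 0 \<le> p e \<and> p e \<le> 1" "phi \<subseteq> E"
  shows "0 \<le> real_prob E p phi"
  unfolding real_prob_def using assms by (intro mult_nonneg_nonneg prod_nonneg) auto

lemma finite_edges_influence_graph:
  assumes "influence_graph V E p"
  shows "finite E"
  using assms unfolding influence_graph_def by (meson finite_SigmaI finite_subset)

lemma sigma_le_add_sigma:
  assumes "finite E" "\<forall>e\<in>E. 0 \<le> p e \<and> p e \<le> 1"
    and "\<And>phi. phi \<subseteq> E \<Longrightarrow> card (reach A phi) \<le> c + card (reach B phi)"
  shows "sigma E p A \<le> real c + sigma E p B"
proof -
  have "sigma E p A \<le> (\<Sum>phi\<in>Pow E. real_prob E p phi * (real c + real (card (reach B phi))))"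
    unfolding sigma_def using assms(3)
    by (intro sum_mono mult_left_mono real_prob_nonneg[OF assms(2)]) force+
  also have "\<dots> = real c * (\<Sum>phi\<in>Pow E. real_prob E p phi) + sigma E p B"
    unfolding sigma_def by (simp add: algebra_simps sum.distrib sum_distrib_left)
  also have "\<dots> = real c + sigma E p B"
    using sum_real_prob_Pow[OF assms(1)] by simp
  finally show ?thesis .
qed

lemma sigma_le_card_add_sigma_boundary:
  assumes G: "influence_graph V E p" and "Gam \<subseteq> V" and bc: "boundary_cond V E Gam B"
  shows "sigma E p Gam \<le> real (card Gam) + sigma E p B"
proof (rule sigma_le_add_sigma)
  show "finite E" using G by (rule finite_edges_influence_graph)
  have EV: "E \<subseteq> V \<times> V" and fV: "finite V" using G unfolding influence_graph_def by auto
  show "\<forall>e\<in>E. 0 \<le> p e \<and> p e \<le> 1" using G unfolding influence_graph_def by simp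
  fix phi assume phi: "phi \<subseteq> E"
  have "B \<subseteq> V" using bc \<open>Gam \<subseteq> V\<close> unfolding boundary_cond_def by blast
  then have "finite (Gam \<union> reach B phi)"
    using reach_subset[of B V phi] phi EV fV \<open>Gam \<subseteq> V\<close> by (meson finite_subset le_sup_iff order_trans)
  then have "card (reach Gam phi) \<le> card (Gam \<union> reach B phi)"
    using reach_subset_Un_reach_boundary[OF EV phi bc] by (rule card_mono)
  also have "\<dots> \<le> card Gam + card (reach B phi)" by (rule card_Un_le)
  finally show "card (reach Gam phi) \<le> card Gam + card (reach B phi)" .
qed

lemma sigma_le_OPT_N:
  assumes "finite V" "S \<subseteq> V" "card S \<le> k"
  shows "sigma E p S \<le> OPT_N V E p k"
  unfolding OPT_N_def
proof (rule Max_ge)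
  have "{sigma E p S | S. S \<subseteq> V \<and> card S \<le> k} \<subseteq> sigma E p ` Pow V" by auto
  then show "finite {sigma E p S | S. S \<subseteq> V \<and> card S \<le> k}"
    using assms(1) by (meson finite_Pow_iff finite_imageI finite_subset)
  show "sigma E p S \<in> {sigma E p S | S. S \<subseteq> V \<and> card S \<le> k}" using assms(2,3) by blast
qed

lemma inj_on_undirected_edge:
  assumes "\<forall>(u, v)\<in>E. u \<noteq> v \<and> (v, u) \<notin> E"
  shows "inj_on (\<lambda>(u, v). {u, v}) E"
proof (rule inj_onI, clarify)
  fix x1 x2 y1 y2 assume "(x1, x2) \<in> E" "(y1, y2) \<in> E" "{x1, x2} = {y1, y2}"
  then show "x1 = y1 \<and> x2 = y2" using assms by (auto simp: doubleton_eq_iff)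
qed

lemma card_edges_in_arborescence:
  assumes "in_arborescence V E r"
  shows "card E = card V - 1"
proof -
  have "inj_on (\<lambda>(u, v). {u, v}) E"
    using assms unfolding in_arborescence_def by (intro inj_on_undirected_edge) simp
  then have "card E = card ((\<lambda>(u, v). {u, v}) ` E)" by (rule card_image[symmetric])
  also have "(\<lambda>(u, v). {u, v}) ` E = {{u, v} | u v. (u, v) \<in> E}" by auto
  also have "card \<dots> = card V - 1" using assms unfolding in_arborescence_def by blast
  finally show ?thesis .
qed

text \<open>Choosing one out-edge for each non-root node already uses up \<open>|V| - 1\<close> edges, and such a
  choice can contain at most one of two edges leaving the same node.\<close>
lemma single_valued_if_card_edges_lt:
  assumes "finite E" "finite V" "r \<in> V" "\<forall>w\<in>V - {r}. \<exists>y. (w, y) \<in> E"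
    and "card E < card V"
  shows "single_valued E"
proof (rule single_valuedI, rule ccontr)
  fix v a b assume "(v, a) \<in> E" "(v, b) \<in> E" "a \<noteq> b"
  define g where "g w = (w, SOME y. (w, y) \<in> E)" for w
  have "g w \<in> E" if "w \<in> V - {r}" for w
    using someI_ex[of "\<lambda>y. (w, y) \<in> E"] assms(4) that unfolding g_def by blast
  then have gE: "g ` (V - {r}) \<subseteq> E" by blast
  have "inj_on g (V - {r})" unfolding g_def by (rule inj_onI) simp
  then have card_g: "card (g ` (V - {r})) = card V - 1"
    using assms(2,3) by (simp add: card_image)
  have "(v, a) \<notin> g ` (V - {r}) \<or> (v, b) \<notin> g ` (V - {r})"
    using \<open>a \<noteq> b\<close> unfolding g_def by fastforce
  then have "g ` (V - {r}) \<subset> E" using gE \<open>(v, a) \<in> E\<close> \<open>(v, b) \<in> E\<close> by blast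
  then have "card V - 1 < card E" using psubset_card_mono[OF assms(1)] card_g by metis
  then show False using assms(5) by linarith
qed

lemma single_valued_in_arborescence:
  assumes "finite E" "finite V" "in_arborescence V E r"
  shows "single_valued E"
proof (rule single_valued_if_card_edges_lt[OF assms(1,2)])
  show "r \<in> V" using assms(3) unfolding in_arborescence_def by simp
  have "0 < card V" using \<open>r \<in> V\<close> assms(2) by (auto simp: card_gt_0_iff)
  then show "card E < card V" using card_edges_in_arborescence[OF assms(3)] by simp
  show "\<forall>w\<in>V - {r}. \<exists>y. (w, y) \<in> E"
  proof
    fix w assume "w \<in> V - {r}"
    then have "(w, r) \<in> E\<^sup>+"
      using assms(3) unfolding in_arborescence_def by (auto simp: rtrancl_eq_or_trancl)
    then show "\<exists>y. (w, y) \<in> E" by (meson tranclD)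
  qed
qed

lemma card_reachable_terminals_le:
  assumes "single_valued R" "finite S" "T \<subseteq> R\<^sup>* `` S" "T \<inter> Domain R = {}"
  shows "card T \<le> card S"
proof -
  define src where "src x = (SOME s. s \<in> S \<and> (s, x) \<in> R\<^sup>*)" for x
  have src: "src x \<in> S \<and> (src x, x) \<in> R\<^sup>*" if "x \<in> T" for x
    using someI_ex[of "\<lambda>s. s \<in> S \<and> (s, x) \<in> R\<^sup>*"] that assms(3) unfolding src_def by blast
  have "inj_on src T"
  proof (rule inj_onI)
    fix x y assume "x \<in> T" "y \<in> T" "src x = src y"
    then have "(x, y) \<in> R\<^sup>* \<or> (y, x) \<in> R\<^sup>*"
      using src single_valued_confluent[OF assms(1)] by metis
    moreover have "z = x" if "x \<in> T" "(x, z) \<in> R\<^sup>*" for x z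
      using that(2,1) assms(4) by (cases rule: converse_rtranclE) blast+
    ultimately show "x = y" using \<open>x \<in> T\<close> \<open>y \<in> T\<close> by metis
  qed
  then show ?thesis using card_inj_on_le[OF _ _ assms(2)] src by blast
qed

lemma exists_boundary_card_le:
  assumes "single_valued E" "R \<subseteq> E" "finite S"
  shows "\<exists>B. boundary_cond V E (reach S R) B \<and> card B \<le> card S"
proof (intro exI conjI)
  let ?Gam = "reach S R"
  define B where "B = {x \<in> ?Gam. \<exists>y. (x, y) \<in> E \<and> y \<notin> ?Gam}"
  show "boundary_cond V E ?Gam B" unfolding boundary_cond_def B_def by blast
  have "x \<notin> Domain R" if "x \<in> B" for x
  proof
    assume "x \<in> Domain R"
    then obtain z where "(x, z) \<in> R" by blast
    obtain y where "x \<in> ?Gam" "(x, y) \<in> E" "y \<notin> ?Gam" using \<open>x \<in> B\<close> unfolding B_def by blast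
    have "z = y" using single_valuedD[OF assms(1)] \<open>(x, z) \<in> R\<close> \<open>(x, y) \<in> E\<close> assms(2) by blast
    moreover have "z \<in> ?Gam"
      using \<open>x \<in> ?Gam\<close> \<open>(x, z) \<in> R\<close> unfolding reach_def by (blast intro: rtrancl_into_rtrancl)
    ultimately show False using \<open>y \<notin> ?Gam\<close> by simp
  qed
  then have "B \<inter> Domain R = {}" by blast
  moreover have "B \<subseteq> R\<^sup>* `` S" unfolding B_def reach_def by blast
  moreover have "single_valued R" using assms(2,1) by (rule single_valued_subset)
  ultimately show "card B \<le> card S" using assms(3) by (intro card_reachable_terminals_le)
qed

theorem lemma4:
  fixes V :: "'a set" and E :: "('a \<times> 'a) set" and p :: "'a \<times> 'a \<Rightarrow> real"
    and psi :: "'a set \<times> ('a \<times> 'a) set"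
  assumes G: "influence_graph V E p"
    and psi: "partial_realization V E psi"
  shows "(\<forall>B. is_boundary V E psi B \<longrightarrow>
            sigma E p (Gamma_psi psi) \<le> real (card (Gamma_psi psi)) + sigma E p B)
       \<and> (\<forall>r. in_arborescence V E r \<longrightarrow>
            sigma E p (Gamma_psi psi) \<le> real (card (Gamma_psi psi)) + OPT_N V E p (card (pdom psi)))"
proof (intro conjI allI impI)
  have EV: "E \<subseteq> V \<times> V" and fV: "finite V" using G unfolding influence_graph_def by auto
  have SV: "pdom psi \<subseteq> V" and RE: "snd psi \<subseteq> E"
    using psi unfolding partial_realization_def pdom_def by auto
  have Gam: "Gamma_psi psi = reach (pdom psi) (snd psi)" unfolding Gamma_psi_def pdom_def ..
  have GV: "Gamma_psi psi \<subseteq> V" unfolding Gam using SV RE EV by (intro reach_subset) auto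
  show "sigma E p (Gamma_psi psi) \<le> real (card (Gamma_psi psi)) + sigma E p B"
    if "is_boundary V E psi B" for B
    using sigma_le_card_add_sigma_boundary[OF G GV] that unfolding is_boundary_def by blast
  fix r assume "in_arborescence V E r"
  with finite_edges_influence_graph[OF G] fV have "single_valued E"
    by (rule single_valued_in_arborescence)
  moreover have "finite (pdom psi)" using fV SV by (rule finite_subset[rotated])
  ultimately obtain B where bc: "boundary_cond V E (Gamma_psi psi) B" and "card B \<le> card (pdom psi)"
    using exists_boundary_card_le[OF _ RE] unfolding Gam by blast
  moreover have "B \<subseteq> V" using bc GV unfolding boundary_cond_def by blast
  ultimately have "sigma E p B \<le> OPT_N V E p (card (pdom psi))" using fV by (intro sigma_le_OPT_N)
  then show "sigma E p (Gamma_psi psi) \<le> real (card (Gamma_psi psi)) + OPT_N V E p (card (pdom psi))"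
    using sigma_le_card_add_sigma_boundary[OF G GV bc] by linarith
qed

end
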